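(* Let $\mathbf{f}=\{f_1,\dots,f_m\}$ be an $m$-objective problem ($m\ge 2$, not necessarily simple) whose Pareto front $\mathbf{f}X^*(\mathbf{f})\subseteq\mathbb{R}^m$ is a topological $(m-1)$-manifold (possibly with boundary). For each $i\in\{1,\dots,m\}$ let $\pi_{-i}:\mathbb{R}^m\to\mathbb{R}^{i-1}\times\{0\}\times\mathbb{R}^{m-i}\cong\mathbb{R}^{m-1}$, $(y_1,\dots,y_m)\mapsto(y_1,\dots,y_{i-1},0,y_{i+1},\dots,y_m)$. Then the restriction of $\pi_{-i}$ to $\operatorname{Int}\mathbf{f}X^*(\mathbf{f})$ is a topological embedding.
   Context: A problem is a finite set $\mathbf{f}=\{f_1,\dots,f_m\}$ of functions $f_i:\mathbb{R}^n\to\mathbb{R}$ together with a feasible region $X\subseteq\mathbb{R}^n$, to be minimized simultaneously; its evaluation map is $x\mapsto(f_1(x),\dots,f_m(x))$. The Pareto set $X^*(\mathbf{f})$ is the set of $x^*\in X$ for which there is no $x\in X$ with $f_i(x)\le f_i(x^* )$ for all $i$ and $f_j(x)<f_j(x^* )$ for some $j$; the Pareto front $\mathbf{f}X^*(\mathbf{f})$ is its image under the evaluation map, with the subspace topology of $\mathbb{R}^m$. For a topological manifold with boundary $M$, $\operatorname{Int}M$ denotes its manifold interior (points having an open neighborhood homeomorphic to Euclidean space) and $\partial M$ its manifold boundary. *)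

theory Defs
  imports "HOL-Analysis.Analysis"
begin

text \<open>A multi-objective problem: a finite family of objectives indexed by the finite
  type 'm (so m = CARD('m)), each a map real^'n \<Rightarrow> real, together with a feasible
  region X.\<close>

definition eval_map :: "('m::finite \<Rightarrow> real^'n \<Rightarrow> real) \<Rightarrow> real^'n \<Rightarrow> real^'m" where
  "eval_map f x = (\<chi> i. f i x)"

definition pareto_set :: "('m::finite \<Rightarrow> real^'n \<Rightarrow> real) \<Rightarrow> (real^'n) set \<Rightarrow> (real^'n) set" where
  "pareto_set f X = {xs \<in> X. \<not> (\<exists>x\<in>X. (\<forall>i. f i x \<le> f i xs) \<and> (\<exists>j. f j x < f j xs))}"

definition pareto_front :: "('m::finite \<Rightarrow> real^'n \<Rightarrow> real) \<Rightarrow> (real^'n) set \<Rightarrow> (real^'m) set" where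
  "pareto_front f X = eval_map f ` pareto_set f X"

text \<open>Topological k-manifold with boundary, for a subset M of a Euclidean space with the
  subspace topology (Hausdorff and second countable automatically).  The model space, a
  closed half-space of R^k, is realised as a closed half-space {y \<in> L. a \<bullet> y \<ge> 0} of a
  k-dimensional linear subspace L of the ambient space (linearly homeomorphic to the
  standard model R^(k-1) \<times> [0,\<infinity>)).\<close>

definition top_manifold_with_boundary :: "nat \<Rightarrow> 'a::euclidean_space set \<Rightarrow> bool" where
  "top_manifold_with_boundary k M \<longleftrightarrow>
     (\<forall>x\<in>M. \<exists>U. openin (top_of_set M) U \<and> x \<in> U \<and>
        (\<exists>(L::'a set) a V. subspace L \<and> dim L = k \<and> a \<in> L \<and> a \<noteq> 0 \<and>
                 openin (top_of_set {y \<in> L. a \<bullet> y \<ge> 0}) V \<and> U homeomorphic V))"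

definition manifold_interior :: "nat \<Rightarrow> 'a::euclidean_space set \<Rightarrow> 'a set" where
  "manifold_interior k M =
     {x \<in> M. \<exists>U. openin (top_of_set M) U \<and> x \<in> U \<and>
        (\<exists>L::'a set. subspace L \<and> dim L = k \<and> U homeomorphic L)}"

definition proj_minus :: "'m::finite \<Rightarrow> real^'m \<Rightarrow> real^'m" where
  "proj_minus i y = (\<chi> j. if j = i then 0 else y $ j)"

end

theory Submission
  imports Defs
begin

text \<open>Two distinct points of a Pareto front agreeing in all coordinates but the i-th would
  be comparable, so one would dominate the other; hence \<pi>_{-i} is injective on the whole
  front.  On the manifold interior every point has a neighbourhood homeomorphic to
  R^(m-1), and \<pi>_{-i} maps into the hyperplane {y. y_i = 0} of dimension m-1, so invariance
  of domain makes the continuous injection \<pi>_{-i} an open map there, i.e. an embedding.\<close>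

lemma pareto_front_not_dominated:
  assumes "u \<in> pareto_front f X" "v \<in> pareto_front f X"
    and "\<And>j. u $ j \<le> v $ j" "u $ i < v $ i"
  shows False
proof -
  obtain a where a: "a \<in> pareto_set f X" "u = eval_map f a"
    using assms(1) unfolding pareto_front_def by auto
  obtain b where b: "b \<in> pareto_set f X" "v = eval_map f b"
    using assms(2) unfolding pareto_front_def by auto
  have "a \<in> X"
    using a(1) by (simp add: pareto_set_def)
  moreover have "\<forall>j. f j a \<le> f j b" "f i a < f i b"
    using a(2) b(2) assms(3,4) by (simp_all add: eval_map_def)
  ultimately show False
    using b(1) unfolding pareto_set_def by blast
qed

lemma proj_minus_eq_iff: "proj_minus i x = proj_minus i y \<longleftrightarrow> (\<forall>j. j \<noteq> i \<longrightarrow> x $ j = y $ j)"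
  by (auto simp: proj_minus_def vec_eq_iff)

lemma inj_on_proj_minus_pareto_front: "inj_on (proj_minus i) (pareto_front f X)"
proof (rule inj_onI)
  fix x y
  assume x: "x \<in> pareto_front f X" and y: "y \<in> pareto_front f X"
    and "proj_minus i x = proj_minus i y"
  then have off_i: "\<And>j. j \<noteq> i \<Longrightarrow> x $ j = y $ j"
    by (simp add: proj_minus_eq_iff)
  have "\<not> x $ i < y $ i"
    using pareto_front_not_dominated[OF x y, of i] off_i by (metis order.refl less_imp_le)
  moreover have "\<not> y $ i < x $ i"
    using pareto_front_not_dominated[OF y x, of i] off_i by (metis order.refl less_imp_le)
  ultimately show "x = y"
    using off_i by (metis vec_eq_iff linorder_neqE_linordered_idom)
qed

lemma linear_proj_minus: "linear (proj_minus i)"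
  by (rule linearI) (auto simp: proj_minus_def vec_eq_iff)

lemma proj_minus_in_coordinate_hyperplane: "proj_minus i y \<in> {x. axis i 1 \<bullet> x = 0}"
  by (simp add: proj_minus_def inner_commute[of "axis i 1"] inner_axis)

lemma dim_coordinate_hyperplane:
  "dim {x::real^'m. axis i 1 \<bullet> x = 0} = CARD('m) - 1"
  by (subst dim_hyperplane) (auto simp: axis_eq_0_iff)

lemma openin_image_homeomorphic_subspace:
  fixes q :: "'a::euclidean_space \<Rightarrow> 'b::euclidean_space" and L :: "'c::euclidean_space set"
  assumes "openin (top_of_set U) S"
    and "U homeomorphic L" "subspace L" "subspace W" "dim W \<le> dim L"
    and "continuous_on U q" "inj_on q U" "q ` U \<subseteq> W"
  shows "openin (top_of_set W) (q ` S)"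
proof -
  obtain h g where hg: "homeomorphism U L h g"
    using assms(2) homeomorphic_def by blast
  have SU: "S \<subseteq> U"
    using openin_imp_subset[OF assms(1)] .
  have hS_open: "openin (top_of_set L) (h ` S)"
    using homeomorphism_imp_open_map[OF hg assms(1)] .
  have g_hS: "g ` h ` S = S"
    using homeomorphism_apply1[OF hg] SU by (force simp: image_comp)
  have hS_L: "h ` S \<subseteq> L"
    using openin_imp_subset[OF hS_open] .
  have "openin (top_of_set W) ((q \<circ> g) ` h ` S)"
  proof (rule invariance_of_domain_subspaces[OF hS_open assms(3-5)])
    have "continuous_on (h ` S) g"
      using continuous_on_subset[OF homeomorphism_cont2[OF hg] hS_L] .
    moreover have "continuous_on (g ` h ` S) q"
      unfolding g_hS using continuous_on_subset[OF assms(6) SU] .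
    ultimately show "continuous_on (h ` S) (q \<circ> g)"
      by (rule continuous_on_compose)
    show "q \<circ> g \<in> h ` S \<rightarrow> W"
      using assms(8) SU homeomorphism_apply1[OF hg] by (auto simp: subset_iff)
    have "inj_on g (h ` S)"
      by (rule inj_on_inverseI[of _ h]) (use hg hS_L in \<open>auto simp: homeomorphism_def\<close>)
    moreover have "inj_on q (g ` h ` S)"
      unfolding g_hS using inj_on_subset[OF assms(7) SU] .
    ultimately show "inj_on (q \<circ> g) (h ` S)"
      by (rule comp_inj_on)
  qed
  then show ?thesis
    by (simp only: image_comp[symmetric] g_hS)
qed

lemma manifold_interior_subset: "manifold_interior k M \<subseteq> M"
  by (auto simp: manifold_interior_def)

lemma openin_manifold_interior_chart:
  fixes M :: "'a::euclidean_space set"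
  assumes "x \<in> manifold_interior k M"
  obtains U L where "openin (top_of_set (manifold_interior k M)) U" "x \<in> U"
    "subspace L" "dim L = k" "U homeomorphic (L :: 'a set)"
proof -
  obtain U L where U: "openin (top_of_set M) U" "x \<in> U"
    and L: "subspace L" "dim L = k" "U homeomorphic (L :: 'a set)"
    using assms unfolding manifold_interior_def by blast
  have "U \<subseteq> manifold_interior k M"
  proof
    fix z assume "z \<in> U"
    then have "z \<in> M"
      using openin_imp_subset[OF U(1)] by blast
    then show "z \<in> manifold_interior k M"
      unfolding manifold_interior_def using U(1) \<open>z \<in> U\<close> L by blast
  qed
  then have "openin (top_of_set (manifold_interior k M)) U"
    using openin_subset_trans[OF U(1) _ manifold_interior_subset] by blast
  then show thesis
    by (rule that[OF _ U(2) L])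
qed

lemma homeomorphism_manifold_interior_into_subspace:
  fixes p :: "'a::euclidean_space \<Rightarrow> 'b::euclidean_space" and M :: "'a set" and k :: nat
  defines "I \<equiv> manifold_interior k M"
  assumes "continuous_on I p" "inj_on p I" "p ` I \<subseteq> W" "subspace W" "dim W \<le> k"
  shows "\<exists>h. homeomorphism I (p ` I) p h"
proof -
  have "openin (top_of_set (p ` I)) (p ` S)" if S: "openin (top_of_set I) S" for S
  proof (subst openin_subopen, intro ballI)
    fix y assume "y \<in> p ` S"
    then obtain x where x: "x \<in> S" "y = p x" by auto
    then have "x \<in> I"
      using openin_imp_subset[OF S] by blast
    then obtain U L where U: "openin (top_of_set I) U" "x \<in> U"
      and L: "subspace L" "dim L = k" "U homeomorphic (L :: 'a set)"
      unfolding I_def by (rule openin_manifold_interior_chart)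
    have UI: "U \<subseteq> I"
      using openin_imp_subset[OF U(1)] .
    have "openin (top_of_set U) (S \<inter> U)"
      using openin_subset_trans[OF openin_Int[OF S U(1)] _ UI] by blast
    then have "openin (top_of_set W) (p ` (S \<inter> U))"
    proof (rule openin_image_homeomorphic_subspace[OF _ L(3) L(1) assms(5)])
      show "dim W \<le> dim L" using assms(6) L(2) by simp
      show "continuous_on U p" using continuous_on_subset[OF assms(2) UI] .
      show "inj_on p U" using inj_on_subset[OF assms(3) UI] .
      show "p ` U \<subseteq> W" using assms(4) UI by blast
    qed
    moreover have "p ` (S \<inter> U) \<subseteq> p ` I"
      using UI by blast
    ultimately have "openin (top_of_set (p ` I)) (p ` (S \<inter> U))"
      by (rule openin_subset_trans[OF _ _ assms(4)])
    moreover have "y \<in> p ` (S \<inter> U)"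
      using x U(2) by blast
    ultimately show "\<exists>T. openin (top_of_set (p ` I)) T \<and> y \<in> T \<and> T \<subseteq> p ` S"
      by blast
  qed
  then obtain h where "homeomorphism I (p ` I) p h"
    using homeomorphism_injective_open_map[OF assms(2) refl assms(3)] by blast
  then show ?thesis by blast
qed

theorem lemma1:
  fixes f :: "'m::finite \<Rightarrow> real^'n \<Rightarrow> real"
    and X :: "(real^'n) set"
    and i :: 'm
  assumes "CARD('m) \<ge> 2"
    and "top_manifold_with_boundary (CARD('m) - 1) (pareto_front f X)"
  shows "\<exists>h. homeomorphism
               (manifold_interior (CARD('m) - 1) (pareto_front f X))
               (proj_minus i ` manifold_interior (CARD('m) - 1) (pareto_front f X))
               (proj_minus i) h"
proof (rule homeomorphism_manifold_interior_into_subspace)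
  show "continuous_on (manifold_interior (CARD('m) - 1) (pareto_front f X)) (proj_minus i)"
    by (simp add: linear_continuous_on linear_linear linear_proj_minus)
  show "inj_on (proj_minus i) (manifold_interior (CARD('m) - 1) (pareto_front f X))"
    using inj_on_proj_minus_pareto_front manifold_interior_subset by (rule inj_on_subset)
  show "proj_minus i ` manifold_interior (CARD('m) - 1) (pareto_front f X)
      \<subseteq> {x. axis i 1 \<bullet> x = 0}"
    using proj_minus_in_coordinate_hyperplane by blast
  show "subspace {x::real^'m. axis i 1 \<bullet> x = 0}"
    by (rule subspace_hyperplane)
  show "dim {x::real^'m. axis i 1 \<bullet> x = 0} \<le> CARD('m) - 1"
    by (simp add: dim_coordinate_hyperplane)
qed

end
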